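(* Let $\alpha,\beta,\sigma$ be real numbers with $0<\beta<1$, $3\beta\le\alpha<2+\beta$, and $0<\sigma<\frac{2+\beta-\alpha}{2}$. Let $\phi_n:\mathbb{R}\to\mathbb{R}$ ($n\ge0$) be measurable functions with $|\phi_n(s)|\le\sigma|s|$ for all $s\in\mathbb{R}$. Consider the difference equation in $C[0,1]$ (real continuous functions on $[0,1]$): $$x_{n+1}(r)=\frac{\alpha r}{r+1}x_n(r)+\frac{\beta(\beta-\alpha r)}{(r+1)^2}x_{n-1}(r)+\int_0^r\phi_n\Big(x_n(s)-\frac{\beta}{s+1}x_{n-1}(s)\Big)\,ds,\quad r\in[0,1],\ n\ge0.$$ Then for every pair of initial functions $x_0,x_{-1}\in C[0,1]$, the resulting sequence $\{x_n\}$ converges uniformly on $[0,1]$ to the zero function.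
   Context: $C[0,1]$ is the real Banach algebra of continuous real functions on $[0,1]$ with pointwise operations and the sup norm. *)

theory Defs
  imports "HOL-Analysis.Analysis"
begin

end

theory Submission
  imports Defs
begin

(* Put y_n(r) = x_{n+1}(r) - beta/(r+1) * x_n(r).  A direct computation shows
   that y obeys the FIRST-order recurrence
     y_{n+1}(r) = (alpha r - beta)/(r+1) * y_n(r) + int_0^r phi_n(y_n(s)) ds.
   On [0,1] the coefficient has modulus at most (alpha-beta)/2 (this uses 3 beta <= alpha)
   and the integral term is at most sigma * sup|y_n|, so sup|y_n| contracts with ratio
   rho = (alpha-beta)/2 + sigma < 1 and decays geometrically.  Then x_{n+1} = beta/(r+1) x_n + y_n
   with beta/(r+1) <= beta < 1 gives |x_n| <= K (n+1) gamma^n for gamma = max beta rho < 1,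
   a bound tending to 0 uniformly in r.  The integral estimate holds for every integrand
   (a non-integrable one has integral 0). *)

lemma set_integral_Icc_abs_le:
  fixes f :: "real \<Rightarrow> real"
  assumes "0 \<le> r" "0 \<le> C" "\<And>s. s \<in> {0..r} \<Longrightarrow> \<bar>f s\<bar> \<le> C"
  shows "\<bar>LINT s:{0..r}|lborel. f s\<bar> \<le> C * r"
proof -
  have "\<bar>LINT s:{0..r}|lborel. f s\<bar> \<le> (LINT s|lborel. \<bar>indicator {0..r} s *\<^sub>R f s\<bar>)"
    unfolding set_lebesgue_integral_def by (rule integral_abs_bound)
  also have "\<dots> \<le> (LINT s|lborel. indicator {0..r} s * C)"
  proof (rule integral_mono')
    have "integrable lborel (\<lambda>s::real. indicator {0..r} s *\<^sub>R C)"
      using assms(1) by (intro integrable_indicator) (auto simp: emeasure_lborel_Icc)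
    then show "integrable lborel (\<lambda>s. indicator {0..r} s * C)" by simp
  qed (use assms in \<open>auto simp: indicator_def\<close>)
  also have "\<dots> = C * r" using assms(1) by simp
  finally show ?thesis .
qed

lemma continuous_on_compact_abs_bound:
  fixes f :: "real \<Rightarrow> real"
  assumes "compact S" "continuous_on S f"
  obtains B where "B > 0" "\<And>r. r \<in> S \<Longrightarrow> \<bar>f r\<bar> \<le> B"
proof -
  have "bounded (f ` S)" using assms by (intro compact_imp_bounded compact_continuous_image)
  then show ?thesis using that unfolding bounded_pos by auto
qed

lemma uniform_contraction_decay:
  fixes y :: "nat \<Rightarrow> 'a \<Rightarrow> real"
  assumes "0 \<le> M" "0 \<le> \<rho>" "\<And>r. r \<in> S \<Longrightarrow> \<bar>y 0 r\<bar> \<le> M"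
    and step: "\<And>n B r. 0 \<le> B \<Longrightarrow> (\<And>s. s \<in> S \<Longrightarrow> \<bar>y n s\<bar> \<le> B) \<Longrightarrow>
                     r \<in> S \<Longrightarrow> \<bar>y (Suc n) r\<bar> \<le> \<rho> * B"
    and "r \<in> S"
  shows "\<bar>y n r\<bar> \<le> M * \<rho> ^ n"
  using \<open>r \<in> S\<close>
proof (induction n arbitrary: r)
  case 0 then show ?case using assms(3) by simp
next
  case (Suc n)
  have "\<bar>y (Suc n) r\<bar> \<le> \<rho> * (M * \<rho> ^ n)"
    using step[of "M * \<rho> ^ n" n r] Suc assms(1,2) by auto
  then show ?case by (simp add: algebra_simps)
qed

lemma resonant_linear_bound:
  fixes x y :: "nat \<Rightarrow> 'a \<Rightarrow> real" and c :: "'a \<Rightarrow> real"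
  assumes "0 \<le> \<gamma>" "\<bar>x 0 r\<bar> \<le> K"
    and "\<And>n. x (Suc n) r = c r * x n r + y n r"
    and "\<bar>c r\<bar> \<le> \<gamma>" "\<And>n. \<bar>y n r\<bar> \<le> K * \<gamma> ^ Suc n"
  shows "\<bar>x n r\<bar> \<le> K * real (Suc n) * \<gamma> ^ n"
proof (induction n)
  case 0 then show ?case using assms(2) by simp
next
  case (Suc n)
  have "\<bar>c r * x n r\<bar> \<le> \<gamma> * (K * real (Suc n) * \<gamma> ^ n)"
    unfolding abs_mult using assms(1,4) Suc by (intro mult_mono) auto
  then have "\<bar>x (Suc n) r\<bar> \<le> \<gamma> * (K * real (Suc n) * \<gamma> ^ n) + K * \<gamma> ^ Suc n"
    using assms(3,5)[of n] abs_triangle_ineq[of "c r * x n r" "y n r"] by linarith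
  then show ?case by (simp add: algebra_simps)
qed

lemma Suc_times_power_tendsto_zero:
  fixes \<gamma> :: real
  assumes "0 \<le> \<gamma>" "\<gamma> < 1"
  shows "(\<lambda>n. real (Suc n) * \<gamma> ^ n) \<longlonglongrightarrow> 0"
proof -
  have "(\<lambda>n. real n * \<gamma> ^ n + \<gamma> ^ n) \<longlonglongrightarrow> 0 + 0"
    by (intro tendsto_add powser_times_n_limit_0 LIMSEQ_realpow_zero) (use assms in auto)
  then show ?thesis by (simp add: algebra_simps)
qed

lemma uniform_limit_zero_if_bounded:
  fixes f :: "nat \<Rightarrow> 'a \<Rightarrow> real"
  assumes "\<And>n r. r \<in> S \<Longrightarrow> \<bar>f n r\<bar> \<le> b n" "b \<longlonglongrightarrow> 0"
  shows "uniform_limit S f (\<lambda>_. 0) sequentially"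
proof (rule uniform_limitI)
  fix e :: real assume "e > 0"
  then have "\<forall>\<^sub>F n in sequentially. b n < e" using order_tendstoD(2)[OF assms(2)] by simp
  then show "\<forall>\<^sub>F n in sequentially. \<forall>r\<in>S. dist (f n r) 0 < e"
    by eventually_elim (use assms(1) in \<open>auto simp: dist_real_def intro: le_less_trans\<close>)
qed

lemma linear_recurrence_uniform_decay:
  fixes x y :: "nat \<Rightarrow> 'a \<Rightarrow> real" and c :: "'a \<Rightarrow> real"
  assumes "0 < \<beta>" "\<beta> < 1" "0 \<le> \<rho>" "\<rho> < 1" "0 \<le> M"
    and "\<And>r. r \<in> S \<Longrightarrow> \<bar>x 0 r\<bar> \<le> B"
    and "\<And>n r. r \<in> S \<Longrightarrow> x (Suc n) r = c r * x n r + y n r"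
    and "\<And>r. r \<in> S \<Longrightarrow> \<bar>c r\<bar> \<le> \<beta>"
    and "\<And>n r. r \<in> S \<Longrightarrow> \<bar>y n r\<bar> \<le> M * \<rho> ^ n"
  shows "uniform_limit S x (\<lambda>_. 0) sequentially"
proof -
  define \<gamma> where "\<gamma> = max \<beta> \<rho>"
  define K where "K = max B (M / \<gamma>)"
  have \<gamma>: "0 < \<gamma>" "\<gamma> < 1" "\<beta> \<le> \<gamma>" "\<rho> \<le> \<gamma>" using assms(1-4) unfolding \<gamma>_def by auto
  have forcing: "\<bar>y n r\<bar> \<le> K * \<gamma> ^ Suc n" if "r \<in> S" for n r
  proof -
    have "M * \<rho> ^ n \<le> (M / \<gamma>) * \<gamma> ^ Suc n"
      using assms(3,5) \<gamma> by (simp add: power_mono mult_left_mono)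
    also have "\<dots> \<le> K * \<gamma> ^ Suc n" using \<gamma> unfolding K_def by (intro mult_right_mono) auto
    finally show ?thesis using assms(9)[OF that, of n] by linarith
  qed
  have "\<bar>x n r\<bar> \<le> K * (real (Suc n) * \<gamma> ^ n)" if "r \<in> S" for n r
    using resonant_linear_bound[where x = x and y = y and c = c and \<gamma> = \<gamma> and K = K and r = r]
      assms(6-8)[OF that] forcing[OF that] \<gamma> unfolding K_def by (simp add: mult.assoc)
  then show ?thesis
    using Suc_times_power_tendsto_zero[of \<gamma>] \<gamma>
    by (intro uniform_limit_zero_if_bounded[where b = "\<lambda>n. K * (real (Suc n) * \<gamma> ^ n)"])
       (auto intro: tendsto_mult_right_zero)
qed

text \<open>Substituting \<open>x (n+1) = \<beta>/d * x n + y n\<close> turns the second-order recurrence into a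
  first-order one for \<open>y\<close>; here \<open>d = r + 1\<close>.\<close>

lemma recurrence_reduction:
  fixes a b r A B I d :: real
  assumes "d \<noteq> 0"
  shows "a * r / d * A + b * (b - a * r) / d^2 * B + I - b / d * A
       = (a * r - b) / d * (A - b / d * B) + I"
  using assms by (simp add: field_simps power2_eq_square)

lemma reduced_coefficient_bound:
  fixes \<alpha> \<beta> r :: real
  assumes "0 < \<beta>" "3 * \<beta> \<le> \<alpha>" "r \<in> {0..1}"
  shows "\<bar>(\<alpha> * r - \<beta>) / (r + 1)\<bar> \<le> (\<alpha> - \<beta>) / 2"
proof -
  have r: "0 \<le> r" "r \<le> 1" using assms(3) by auto
  have "(\<alpha> + \<beta>) * r \<le> \<alpha> + \<beta>" using r assms(1,2) by (intro mult_left_le) auto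
  then have "\<alpha> * r - \<beta> \<le> (\<alpha> - \<beta>) / 2 * (r + 1)" by (simp add: algebra_simps)
  moreover have "0 \<le> (3 * \<alpha> - \<beta>) * r" using r assms(1,2) by auto
  then have "\<beta> - \<alpha> * r \<le> (\<alpha> - \<beta>) / 2 * (r + 1)" using assms(2) by (simp add: algebra_simps)
  ultimately have "\<bar>\<alpha> * r - \<beta>\<bar> \<le> (\<alpha> - \<beta>) / 2 * (r + 1)" unfolding abs_le_iff by (intro conjI) linarith+
  then show ?thesis using r by (simp add: abs_divide pos_divide_le_eq)
qed

text \<open>One step of the reduced recurrence contracts the sup norm on \<open>[0,1]\<close> by
  \<open>(\<alpha> - \<beta>)/2 + \<sigma>\<close>: the linear part by the coefficient bound, the integral part because
  \<open>|\<phi> s| \<le> \<sigma> |s|\<close> and the interval has length at most 1.\<close>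

lemma reduced_recurrence_step:
  fixes \<alpha> \<beta> \<sigma> B r :: real and \<phi> y y' :: "real \<Rightarrow> real"
  assumes "0 < \<beta>" "3 * \<beta> \<le> \<alpha>" "0 \<le> \<sigma>" "0 \<le> B" "r \<in> {0..1}"
    and \<phi>: "\<And>s. \<bar>\<phi> s\<bar> \<le> \<sigma> * \<bar>s\<bar>"
    and y: "\<And>s. s \<in> {0..1} \<Longrightarrow> \<bar>y s\<bar> \<le> B"
    and y': "y' r = (\<alpha> * r - \<beta>) / (r + 1) * y r + (LINT s:{0..r}|lborel. \<phi> (y s))"
  shows "\<bar>y' r\<bar> \<le> ((\<alpha> - \<beta>) / 2 + \<sigma>) * B"
proof -
  have "\<bar>LINT s:{0..r}|lborel. \<phi> (y s)\<bar> \<le> \<sigma> * B * r"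
  proof (rule set_integral_Icc_abs_le)
    fix s assume "s \<in> {0..r}"
    then have "\<bar>y s\<bar> \<le> B" using y assms(5) by auto
    then show "\<bar>\<phi> (y s)\<bar> \<le> \<sigma> * B" using \<phi>[of "y s"] assms(3) by (meson mult_left_mono order_trans)
  qed (use assms(3-5) in auto)
  also have "\<dots> \<le> \<sigma> * B" using assms(3-5) by (auto intro!: mult_left_le)
  finally have integral: "\<bar>LINT s:{0..r}|lborel. \<phi> (y s)\<bar> \<le> \<sigma> * B" .
  have linear: "\<bar>(\<alpha> * r - \<beta>) / (r + 1) * y r\<bar> \<le> (\<alpha> - \<beta>) / 2 * B"
    unfolding abs_mult using reduced_coefficient_bound[OF assms(1,2,5)] y[OF assms(5)] assms(1,2)
    by (intro mult_mono) auto
  have "\<bar>y' r\<bar> \<le> \<bar>(\<alpha> * r - \<beta>) / (r + 1) * y r\<bar> + \<bar>LINT s:{0..r}|lborel. \<phi> (y s)\<bar>"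
    unfolding y' by (rule abs_triangle_ineq)
  also have "\<dots> \<le> (\<alpha> - \<beta>) / 2 * B + \<sigma> * B" using linear integral by linarith
  finally show ?thesis by (simp add: algebra_simps)
qed

theorem mainTheorem9:
  fixes \<alpha> \<beta> \<sigma> :: real
    and \<phi> :: "nat \<Rightarrow> real \<Rightarrow> real"
    and x :: "nat \<Rightarrow> real \<Rightarrow> real"
  assumes "0 < \<beta>" "\<beta> < 1" "3 * \<beta> \<le> \<alpha>" "\<alpha> < 2 + \<beta>"
    and "0 < \<sigma>" "\<sigma> < (2 + \<beta> - \<alpha>) / 2"
    and "\<And>n. \<phi> n \<in> borel_measurable borel"
    and "\<And>n s. \<bar>\<phi> n s\<bar> \<le> \<sigma> * \<bar>s\<bar>"
    and "continuous_on {0..1} (x 0)" and "continuous_on {0..1} (x 1)"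
    and "\<And>n r. r \<in> {0..1} \<Longrightarrow>
      x (n + 2) r = \<alpha> * r / (r + 1) * x (n + 1) r
                  + \<beta> * (\<beta> - \<alpha> * r) / (r + 1)^2 * x n r
                  + (LINT s:{0..r}|lborel. \<phi> n (x (n + 1) s - \<beta> / (s + 1) * x n s))"
  shows "uniform_limit {0..1} x (\<lambda>_. 0) sequentially"
proof -
  define \<rho> where "\<rho> = (\<alpha> - \<beta>) / 2 + \<sigma>"
  have \<rho>: "0 \<le> \<rho>" "\<rho> < 1" using assms(1,3,5,6) unfolding \<rho>_def by (auto simp: field_simps)
  define y where "y n r = x (Suc n) r - \<beta> / (r + 1) * x n r" for n r
  have reduced: "y (Suc n) r = (\<alpha> * r - \<beta>) / (r + 1) * y n r
                   + (LINT s:{0..r}|lborel. \<phi> n (y n s))" if "r \<in> {0..1}" for n r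
    using assms(11)[OF that, of n] recurrence_reduction[of "r + 1"] that
    unfolding y_def by (simp add: numeral_2_eq_2)
  have "continuous_on {0..1} (y 0)"
    using assms(9,10) unfolding y_def by (auto intro!: continuous_intros)
  then obtain M where M: "M > 0" "\<And>r. r \<in> {0..1} \<Longrightarrow> \<bar>y 0 r\<bar> \<le> M"
    using continuous_on_compact_abs_bound[of "{0..1}" "y 0"] by auto
  obtain B where B: "\<And>r. r \<in> {0..1} \<Longrightarrow> \<bar>x 0 r\<bar> \<le> B"
    using continuous_on_compact_abs_bound[OF _ assms(9)] by auto
  have y_decay: "\<bar>y n r\<bar> \<le> M * \<rho> ^ n" if "r \<in> {0..1}" for n r
    using uniform_contraction_decay[of M \<rho> "{0..1}" y] reduced_recurrence_step[OF assms(1,3)]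
      reduced assms(5,8) M \<rho> that unfolding \<rho>_def by (simp add: less_imp_le)
  have coefficient: "\<bar>\<beta> / (r + 1)\<bar> \<le> \<beta>" if "r \<in> {0..1}" for r
    using that assms(1) divide_left_mono[of 1 "r + 1" \<beta>] by auto
  show ?thesis
    by (rule linear_recurrence_uniform_decay[where \<beta> = \<beta> and \<rho> = \<rho> and M = M and B = B
                                             and y = y and c = "\<lambda>r. \<beta> / (r + 1)"])
       (use assms(1,2) \<rho> M B y_decay coefficient in \<open>auto simp: y_def\<close>)
qed

end
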